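(* Let $n=2(k+1)$ for an integer $k\ge 2$, and let $\sigma_n$ be the multiset consisting of $k$ copies of $1$, one copy of $\frac{-1}{2k+1}$, and $k+1$ copies of $\frac{1-2k}{2k+1}$. Then $\sum_{\lambda\in\sigma_n}\lambda=0$ (counted with multiplicity), and $\sigma_n$ is not realizable.
   Context: A multiset $\sigma=\{\lambda_1,\dots,\lambda_n\}$ of complex numbers is realizable if there exists an $n\times n$ matrix with all entries real and nonnegative whose eigenvalues, counted with algebraic multiplicity, are exactly $\lambda_1,\dots,\lambda_n$. *)

theory Defs
  imports "Jordan_Normal_Form.Jordan_Normal_Form" "HOL-Library.Multiset"
begin

definition realizable :: "complex multiset \<Rightarrow> bool" where
  "realizable \<sigma> \<longleftrightarrow>
     (\<exists>A :: real mat. A \<in> carrier_mat (size \<sigma>) (size \<sigma>) \<and>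
        (\<forall>i < size \<sigma>. \<forall>j < size \<sigma>. A $$ (i, j) \<ge> 0) \<and>
        char_poly (map_mat complex_of_real A) = (\<Prod>x\<in>#\<sigma>. [:- x, 1:]))"

definition sigma_n :: "nat \<Rightarrow> complex multiset" where
  "sigma_n k = replicate_mset k 1
      + {# complex_of_real (-1 / (2 * real k + 1)) #}
      + replicate_mset (k + 1) (complex_of_real ((1 - 2 * real k) / (2 * real k + 1)))"

end

(*
  Suppose a nonnegative matrix A realizes sigma_n.  Its trace is the sum of sigma_n, which is 0,
  so A has zero diagonal; its eigenvalues have modulus at most 1, so its powers grow at most
  polynomially; and 1 is an eigenvalue of multiplicity k >= 2.

  If A is irreducible, this contradicts the simplicity of the Perron root.  Taking absolute
  values of a left eigenvector for 1 gives a vector w >= 0 with w <= A^T w, and the polynomial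
  growth of the powers forces equality, so w is a positive left fixed vector.  Pairing with w
  shows that no proper principal submatrix has a real eigenvalue >= 1, so the characteristic
  polynomial of each is positive at 1; their sum is the derivative of the characteristic
  polynomial of A at 1, which therefore does not vanish.

  If A is reducible, then after a simultaneous permutation of rows and columns it has a proper
  leading diagonal block whose characteristic polynomial divides that of A.  The block has zero
  trace, so its eigenvalues form a proper nonempty submultiset of sigma_n with sum 0, and
  counting the three values of sigma_n shows that no such submultiset exists.
*)

theory Submission
  imports Defs "Jordan_Normal_Form.Spectral_Radius"
begin

text \<open>Matrices act on functions nat \<Rightarrow> real rather than on carrier vectors; values at
  indices \<ge> n are ignored.\<close>
definition mat_apply :: "real mat \<Rightarrow> nat \<Rightarrow> (nat \<Rightarrow> real) \<Rightarrow> nat \<Rightarrow> real" where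
  "mat_apply B n v = (\<lambda>j. \<Sum>l<n. B $$ (j, l) * v l)"

definition nonneg_mat :: "real mat \<Rightarrow> nat \<Rightarrow> bool" where
  "nonneg_mat B n \<longleftrightarrow> (\<forall>i<n. \<forall>j<n. 0 \<le> B $$ (i, j))"

text \<open>Irreducibility stated as strong connectivity of the digraph of B, which is equivalent to
  B having no simultaneous row and column permutation to block triangular form.\<close>
definition irreducible_mat :: "real mat \<Rightarrow> nat \<Rightarrow> bool" where
  "irreducible_mat B n \<longleftrightarrow> (\<forall>S. S \<subseteq> {..<n} \<longrightarrow> S \<noteq> {} \<longrightarrow> S \<noteq> {..<n} \<longrightarrow>
     (\<exists>j<n. \<exists>l\<in>S. j \<notin> S \<and> 0 < B $$ (j, l)))"

definition poly_bounded_powers :: "real mat \<Rightarrow> nat \<Rightarrow> bool" where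
  "poly_bounded_powers B n \<longleftrightarrow> (\<exists>c1 c2 d. \<forall>m i j. i < n \<longrightarrow> j < n \<longrightarrow>
     \<bar>(B ^\<^sub>m m) $$ (i, j)\<bar> \<le> c1 + c2 * real m ^ d)"

lemma mat_apply_linear:
  "mat_apply B n (\<lambda>j. a * u j + b * v j) = (\<lambda>j. a * mat_apply B n u j + b * mat_apply B n v j)"
  unfolding mat_apply_def by (auto simp: algebra_simps sum.distrib sum_distrib_left)

lemma mat_apply_add: "mat_apply B n (\<lambda>j. u j + v j) = (\<lambda>j. mat_apply B n u j + mat_apply B n v j)"
  using mat_apply_linear[of B n 1 u 1 v] by simp

lemma mat_apply_diff: "mat_apply B n (\<lambda>j. u j - v j) = (\<lambda>j. mat_apply B n u j - mat_apply B n v j)"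
  using mat_apply_linear[of B n 1 u "-1" v] by simp

lemma mat_apply_scale: "mat_apply B n (\<lambda>j. a * u j) = (\<lambda>j. a * mat_apply B n u j)"
  using mat_apply_linear[of B n a u 0 u] by simp

lemma mat_apply_mono:
  assumes "nonneg_mat B n" "\<And>j. j < n \<Longrightarrow> u j \<le> v j" "j < n"
  shows "mat_apply B n u j \<le> mat_apply B n v j"
  unfolding mat_apply_def
  by (rule sum_mono) (use assms in \<open>auto simp: nonneg_mat_def intro: mult_left_mono\<close>)

lemma mat_apply_nonneg:
  assumes "nonneg_mat B n" "\<And>j. j < n \<Longrightarrow> 0 \<le> v j" "j < n"
  shows "0 \<le> mat_apply B n v j"
  using mat_apply_mono[OF assms(1), of "\<lambda>_. 0" v j] assms by (simp add: mat_apply_def)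

lemma mat_apply_ge_term:
  assumes "nonneg_mat B n" "\<And>j. j < n \<Longrightarrow> 0 \<le> v j" "j < n" "l < n"
  shows "B $$ (j, l) * v l \<le> mat_apply B n v j"
  unfolding mat_apply_def
  by (rule member_le_sum[of l "{..<n}" "\<lambda>l. B $$ (j, l) * v l"])
    (use assms in \<open>auto simp: nonneg_mat_def\<close>)

lemma funpow_mat_apply:
  assumes B: "B \<in> carrier_mat n n" and j: "j < n"
  shows "(mat_apply B n ^^ m) v j = (\<Sum>l<n. (B ^\<^sub>m m) $$ (j, l) * v l)"
  using j
proof (induction m arbitrary: v j)
  case 0
  have "(\<Sum>l<n. (B ^\<^sub>m 0) $$ (j, l) * v l) = (\<Sum>l<n. if j = l then v l else 0)"
    by (rule sum.cong) (use B 0 in auto)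
  with 0 show ?case by simp
next
  case (Suc m)
  have "(mat_apply B n ^^ Suc m) v j = (mat_apply B n ^^ m) (mat_apply B n v) j"
    by (simp only: funpow_Suc_right comp_def)
  also have "\<dots> = (\<Sum>l<n. \<Sum>i<n. (B ^\<^sub>m m) $$ (j, l) * B $$ (l, i) * v i)"
    by (simp add: Suc.IH[OF Suc.prems] mat_apply_def sum_distrib_left mult.assoc)
  also have "\<dots> = (\<Sum>i<n. (\<Sum>l<n. (B ^\<^sub>m m) $$ (j, l) * B $$ (l, i)) * v i)"
    by (subst sum.swap) (simp add: sum_distrib_right)
  also have "\<dots> = (\<Sum>i<n. (B ^\<^sub>m Suc m) $$ (j, i) * v i)"
  proof (rule sum.cong[OF refl])
    fix i assume "i \<in> {..<n}"
    then have "(B ^\<^sub>m Suc m) $$ (j, i) = (\<Sum>l<n. (B ^\<^sub>m m) $$ (j, l) * B $$ (l, i))"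
      using B Suc.prems
      by (auto simp: index_mult_mat scalar_prod_def atLeast0LessThan intro!: sum.cong)
    then show "(\<Sum>l<n. (B ^\<^sub>m m) $$ (j, l) * B $$ (l, i)) * v i = (B ^\<^sub>m Suc m) $$ (j, i) * v i"
      by simp
  qed
  finally show ?case .
qed

lemma funpow_mat_apply_ge_power:
  assumes B: "nonneg_mat B n" and c: "0 \<le> c" and v0: "\<And>j. j < n \<Longrightarrow> 0 \<le> v j"
    and Bv: "\<And>j. j < n \<Longrightarrow> c * v j \<le> mat_apply B n v j"
  shows "j < n \<Longrightarrow> c ^ m * v j \<le> (mat_apply B n ^^ m) v j"
proof (induction m arbitrary: j)
  case (Suc m)
  have "c ^ Suc m * v j = c ^ m * (c * v j)" by simp
  also have "\<dots> \<le> c ^ m * mat_apply B n v j"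
    using Bv[OF Suc.prems] c by (intro mult_left_mono) auto
  also have "\<dots> = mat_apply B n (\<lambda>l. c ^ m * v l) j" by (simp add: mat_apply_scale)
  also have "\<dots> \<le> mat_apply B n ((mat_apply B n ^^ m) v) j"
    by (rule mat_apply_mono[OF B Suc.IH Suc.prems])
  finally show ?case by simp
qed simp

lemma exp_not_poly_bounded:
  fixes c K c1 c2 :: real
  assumes c: "1 < c" and bnd: "\<And>m. c ^ m \<le> K * (c1 + c2 * real m ^ d)"
  shows False
proof -
  from poly_exp_bound[of "1/c" "Suc d"] c obtain P where P: "\<And>m. (1/c) ^ m * real m ^ Suc d \<le> P"
    by auto
  define C where "C = \<bar>K\<bar> * (\<bar>c1\<bar> + \<bar>c2\<bar>)"
  define m where "m = nat \<lceil>2 * C * \<bar>P\<bar>\<rceil> + 1"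
  have m1: "1 \<le> m" and mbig: "2 * C * \<bar>P\<bar> < real m" unfolding m_def by linarith+
  have md: "1 \<le> real m ^ d" using m1 by simp
  have "c ^ m \<le> \<bar>K\<bar> * \<bar>c1 + c2 * real m ^ d\<bar>"
    using bnd[of m] by (metis abs_ge_self abs_mult order_trans)
  also have "\<dots> \<le> \<bar>K\<bar> * (\<bar>c1\<bar> * real m ^ d + \<bar>c2\<bar> * real m ^ d)"
  proof (rule mult_left_mono)
    have "\<bar>c1\<bar> \<le> \<bar>c1\<bar> * real m ^ d" using mult_left_mono[OF md, of "\<bar>c1\<bar>"] by simp
    then show "\<bar>c1 + c2 * real m ^ d\<bar> \<le> \<bar>c1\<bar> * real m ^ d + \<bar>c2\<bar> * real m ^ d"
      by (simp add: abs_mult order_trans[OF abs_triangle_ineq])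
  qed simp
  also have "\<dots> = C * real m ^ d" unfolding C_def by (simp add: algebra_simps)
  finally have cm: "c ^ m \<le> C * real m ^ d" .
  have "real m ^ Suc d \<le> P * c ^ m"
    using P[of m] c by (simp add: field_simps power_divide)
  also have "\<dots> \<le> \<bar>P\<bar> * c ^ m" using c by (intro mult_right_mono) auto
  also have "\<dots> \<le> \<bar>P\<bar> * (C * real m ^ d)" by (rule mult_left_mono[OF cm]) simp
  finally have "real m * real m ^ d \<le> (\<bar>P\<bar> * C) * real m ^ d" by (simp add: algebra_simps)
  then have "real m \<le> \<bar>P\<bar> * C" using md m1 by (simp add: mult_le_cancel_right)
  moreover have "0 \<le> \<bar>P\<bar> * C" unfolding C_def by simp
  ultimately show False using mbig by (simp add: mult.commute)
qed

lemma poly_bounded_powers_no_expanding_vector: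
  assumes Bc: "B \<in> carrier_mat n n" and B: "nonneg_mat B n" and bnd: "poly_bounded_powers B n"
    and y: "\<And>j. j < n \<Longrightarrow> 0 < y j" and n: "0 < n"
    and c: "1 < c" and By: "\<And>j. j < n \<Longrightarrow> c * y j \<le> mat_apply B n y j"
  shows False
proof -
  from bnd obtain c1 c2 d where
    cb: "\<And>m i j. i < n \<Longrightarrow> j < n \<Longrightarrow> \<bar>(B ^\<^sub>m m) $$ (i, j)\<bar> \<le> c1 + c2 * real m ^ d"
    unfolding poly_bounded_powers_def by blast
  define Y where "Y = (\<Sum>l<n. y l)"
  have "c ^ m \<le> (Y / y 0) * (c1 + c2 * real m ^ d)" for m
  proof -
    have "c ^ m * y 0 \<le> (mat_apply B n ^^ m) y 0"
      by (rule funpow_mat_apply_ge_power[OF B _ _ By n]) (use c y in \<open>auto intro: less_imp_le\<close>)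
    also have "\<dots> = (\<Sum>l<n. (B ^\<^sub>m m) $$ (0, l) * y l)" by (rule funpow_mat_apply[OF Bc n])
    also have "\<dots> \<le> (\<Sum>l<n. (c1 + c2 * real m ^ d) * y l)"
      using cb[OF n] y by (intro sum_mono mult_right_mono) (auto simp: abs_le_iff less_imp_le)
    also have "\<dots> = (c1 + c2 * real m ^ d) * Y" unfolding Y_def by (simp add: sum_distrib_left)
    finally show ?thesis using y[OF n] by (simp add: field_simps)
  qed
  with exp_not_poly_bounded[OF c] show False by blast
qed

lemma irreducible_mat_support_escape:
  assumes B: "nonneg_mat B n" and irr: "irreducible_mat B n" and v0: "\<And>j. j < n \<Longrightarrow> 0 \<le> v j"
    and S: "{j\<in>{..<n}. 0 < v j} \<noteq> {}" "{j\<in>{..<n}. 0 < v j} \<noteq> {..<n}"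
  shows "\<exists>j<n. v j = 0 \<and> 0 < mat_apply B n v j"
proof -
  from irr[unfolded irreducible_mat_def, rule_format, of "{j\<in>{..<n}. 0 < v j}"] S
  obtain j l where j: "j < n" "\<not> 0 < v j" and l: "l < n" "0 < v l" and Bjl: "0 < B $$ (j, l)"
    by auto
  have "0 < B $$ (j, l) * v l" using Bjl l by simp
  also have "\<dots> \<le> mat_apply B n v j" by (rule mat_apply_ge_term[OF B v0 j(1) l(1)])
  finally show ?thesis using j v0[OF j(1)] by auto
qed

lemma irreducible_mat_subfixed_pos:
  assumes B: "nonneg_mat B n" and irr: "irreducible_mat B n" and v0: "\<And>j. j < n \<Longrightarrow> 0 \<le> v j"
    and i: "i < n" "0 < v i" and Bv: "\<And>j. j < n \<Longrightarrow> mat_apply B n v j \<le> v j"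
    and j: "j < n"
  shows "0 < v j"
proof (rule ccontr)
  assume "\<not> 0 < v j"
  with i j have "{j\<in>{..<n}. 0 < v j} \<noteq> {}" "{j\<in>{..<n}. 0 < v j} \<noteq> {..<n}" by auto
  from irreducible_mat_support_escape[OF B irr v0 this] Bv show False by fastforce
qed

lemma irreducible_mat_transpose:
  assumes A: "A \<in> carrier_mat n n" and irr: "irreducible_mat A n"
  shows "irreducible_mat (transpose_mat A) n"
  unfolding irreducible_mat_def
proof (intro allI impI)
  fix S assume S: "S \<subseteq> {..<n}" "S \<noteq> {}" "S \<noteq> {..<n}"
  then have "{..<n} - S \<subseteq> {..<n}" "{..<n} - S \<noteq> {}" "{..<n} - S \<noteq> {..<n}" by auto
  from irr[unfolded irreducible_mat_def, rule_format, OF this] obtain j l where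
    "j < n" "l \<in> {..<n} - S" "j \<notin> {..<n} - S" "0 < A $$ (j, l)" by auto
  with A S show "\<exists>j<n. \<exists>l\<in>S. j \<notin> S \<and> 0 < transpose_mat A $$ (j, l)"
    by (intro exI[of _ l] conjI bexI[of _ j]) auto
qed

definition id_plus_apply :: "real mat \<Rightarrow> nat \<Rightarrow> (nat \<Rightarrow> real) \<Rightarrow> nat \<Rightarrow> real" where
  "id_plus_apply B n v = (\<lambda>j. v j + mat_apply B n v j)"

lemma id_plus_apply_commute: "id_plus_apply B n (mat_apply B n v) = mat_apply B n (id_plus_apply B n v)"
  unfolding id_plus_apply_def mat_apply_add by simp

lemma id_plus_apply_diff:
  "id_plus_apply B n (\<lambda>j. u j - v j) = (\<lambda>j. id_plus_apply B n u j - id_plus_apply B n v j)"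
  unfolding id_plus_apply_def mat_apply_diff by auto

lemma funpow_id_plus_apply_commute:
  "(id_plus_apply B n ^^ k) (mat_apply B n v) = mat_apply B n ((id_plus_apply B n ^^ k) v)"
proof (induction k)
  case (Suc k)
  show ?case by (simp only: funpow.simps(2) comp_def Suc id_plus_apply_commute)
qed simp

lemma funpow_id_plus_apply_diff:
  "(id_plus_apply B n ^^ k) (\<lambda>j. u j - v j) =
     (\<lambda>j. (id_plus_apply B n ^^ k) u j - (id_plus_apply B n ^^ k) v j)"
proof (induction k)
  case (Suc k)
  show ?case by (simp only: funpow.simps(2) comp_def Suc id_plus_apply_diff)
qed simp

lemma id_plus_apply_ge:
  assumes "nonneg_mat B n" "\<And>j. j < n \<Longrightarrow> 0 \<le> v j" "j < n"
  shows "v j \<le> id_plus_apply B n v j"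
  using mat_apply_nonneg[OF assms] by (simp add: id_plus_apply_def)

lemma funpow_id_plus_apply_nonneg:
  assumes B: "nonneg_mat B n" and v0: "\<And>j. j < n \<Longrightarrow> 0 \<le> v j"
  shows "j < n \<Longrightarrow> 0 \<le> (id_plus_apply B n ^^ k) v j"
proof (induction k arbitrary: j)
  case (Suc k)
  have "(id_plus_apply B n ^^ k) v j \<le> id_plus_apply B n ((id_plus_apply B n ^^ k) v) j"
    by (rule id_plus_apply_ge[OF B]) (use Suc in auto)
  with Suc show ?case by fastforce
qed (use v0 in simp)

lemma card_support_funpow_id_plus_apply:
  assumes B: "nonneg_mat B n" and irr: "irreducible_mat B n" and v0: "\<And>j. j < n \<Longrightarrow> 0 \<le> v j"
    and i: "i < n" "0 < v i"
  shows "min n (k + 1) \<le> card {j\<in>{..<n}. 0 < (id_plus_apply B n ^^ k) v j}"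
proof (induction k)
  case 0
  have "{i} \<subseteq> {j\<in>{..<n}. 0 < (id_plus_apply B n ^^ 0) v j}" using i by auto
  from card_mono[OF _ this] show ?case by simp
next
  case (Suc k)
  define u where "u = (id_plus_apply B n ^^ k) v"
  have u0: "\<And>j. j < n \<Longrightarrow> 0 \<le> u j"
    unfolding u_def by (rule funpow_id_plus_apply_nonneg[of B n v, OF B v0])
  define S where "S = {j\<in>{..<n}. 0 < u j}"
  define S' where "S' = {j\<in>{..<n}. 0 < id_plus_apply B n u j}"
  have IH: "min n (k + 1) \<le> card S" using Suc unfolding S_def u_def by simp
  have SS': "S \<subseteq> S'"
  proof
    fix j assume "j \<in> S"
    with id_plus_apply_ge[of B n u j] B u0 show "j \<in> S'" unfolding S_def S'_def by auto
  qed
  have "min n (Suc k + 1) \<le> card S'"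
  proof (cases "S = {..<n}")
    case True
    then have "S' = {..<n}" using SS' unfolding S'_def by auto
    then show ?thesis by simp
  next
    case False
    moreover have "S \<noteq> {}" using IH i by (cases n) auto
    ultimately obtain j where j: "j < n" "u j = 0" "0 < mat_apply B n u j"
      using irreducible_mat_support_escape[of B n u, OF B irr u0] unfolding S_def by blast
    then have "insert j S \<subseteq> S'" "j \<notin> S"
      using SS' unfolding S_def S'_def id_plus_apply_def by auto
    moreover have "finite S" "finite S'" unfolding S_def S'_def by auto
    ultimately have "card S + 1 \<le> card S'" using card_mono[of S' "insert j S"] by simp
    with IH show ?thesis by linarith
  qed
  then show ?case unfolding S'_def u_def by simp
qed

lemma funpow_id_plus_apply_pos:
  assumes B: "nonneg_mat B n" and irr: "irreducible_mat B n" and v0: "\<And>j. j < n \<Longrightarrow> 0 \<le> v j"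
    and i: "i < n" "0 < v i" and j: "j < n"
  shows "0 < (id_plus_apply B n ^^ (n - 1)) v j"
proof -
  let ?S = "{j\<in>{..<n}. 0 < (id_plus_apply B n ^^ (n - 1)) v j}"
  have "n \<le> card ?S" using card_support_funpow_id_plus_apply[of B n v, OF B irr v0 i, of "n - 1"] i by simp
  moreover have "?S \<subseteq> {..<n}" by auto
  ultimately have "?S = {..<n}" using card_mono[of "{..<n}" ?S] by (intro card_subset_eq) auto
  with j show ?thesis by auto
qed

lemma subinvariant_imp_invariant:
  assumes Bc: "B \<in> carrier_mat n n" and B: "nonneg_mat B n" and irr: "irreducible_mat B n"
    and bnd: "poly_bounded_powers B n"
    and w0: "\<And>j. j < n \<Longrightarrow> 0 \<le> w j" and i: "i < n" "0 < w i"
    and Bw: "\<And>j. j < n \<Longrightarrow> w j \<le> mat_apply B n w j"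
    and j: "j < n"
  shows "mat_apply B n w j = w j"
proof (rule ccontr)
  assume "mat_apply B n w j \<noteq> w j"
  with Bw[OF j] have j0: "w j < mat_apply B n w j" by simp
  txt \<open>(I + B)^(n-1) makes both w and Bw - w positive, and B then stretches the first by a
    factor 1 + e, contradicting the polynomial bound.\<close>
  define dw where "dw = (\<lambda>j. mat_apply B n w j - w j)"
  define y where "y = (id_plus_apply B n ^^ (n - 1)) w"
  define z where "z = (id_plus_apply B n ^^ (n - 1)) dw"
  have y: "\<And>l. l < n \<Longrightarrow> 0 < y l"
    unfolding y_def by (rule funpow_id_plus_apply_pos[of B n w, OF B irr w0 i])
  have z: "\<And>l. l < n \<Longrightarrow> 0 < z l"
    unfolding z_def by (rule funpow_id_plus_apply_pos[of B n dw, OF B irr _ j])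
      (use Bw j0 in \<open>auto simp: dw_def\<close>)
  have By: "mat_apply B n y = (\<lambda>l. y l + z l)"
    unfolding y_def z_def dw_def funpow_id_plus_apply_diff funpow_id_plus_apply_commute by simp
  define e where "e = Min ((\<lambda>l. z l / y l) ` {..<n})"
  have "0 < e" unfolding e_def using i y z by (subst Min_gr_iff) auto
  moreover have "(1 + e) * y l \<le> mat_apply B n y l" if l: "l < n" for l
  proof -
    have "e \<le> z l / y l" unfolding e_def using l by (intro Min_le) auto
    then have "e * y l \<le> z l" using y[OF l] by (simp add: field_simps)
    then show ?thesis unfolding By by (simp add: algebra_simps)
  qed
  ultimately show False
    using poly_bounded_powers_no_expanding_vector[of B n y "1 + e"] Bc B bnd y i by auto
qed

lemma real_eigenvector_fun:
  assumes M: "(M :: real mat) \<in> carrier_mat n n" and r: "poly (char_poly M) \<mu> = 0"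
  obtains z where "\<exists>i<n. z i \<noteq> 0" "\<And>j. j < n \<Longrightarrow> mat_apply M n z j = \<mu> * z j"
proof -
  from r eigenvalue_root_char_poly[OF M] obtain v where "eigenvector M v \<mu>"
    unfolding eigenvalue_def by auto
  then have v: "v \<in> carrier_vec n" "v \<noteq> 0\<^sub>v n" "M *\<^sub>v v = \<mu> \<cdot>\<^sub>v v"
    unfolding eigenvector_def using M by auto
  define z where "z = (\<lambda>i. if i < n then v $ i else 0)"
  have "\<exists>i<n. z i \<noteq> 0"
  proof (rule ccontr)
    assume "\<not> ?thesis"
    then have "v = 0\<^sub>v n" using v(1) unfolding z_def by (intro eq_vecI) auto
    with v(2) show False by simp
  qed
  moreover have "mat_apply M n z j = \<mu> * z j" if j: "j < n" for j
  proof -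
    have "\<mu> * z j = (M *\<^sub>v v) $ j" using v(1,3) j unfolding z_def by simp
    also have "\<dots> = row M j \<bullet> v" using M j by simp
    also have "\<dots> = mat_apply M n z j" unfolding scalar_prod_def mat_apply_def z_def using M v(1) j
      by (auto simp: atLeast0LessThan intro!: sum.cong)
    finally show ?thesis by simp
  qed
  ultimately show ?thesis by (rule that)
qed

lemma abs_eigenvector_subinvariant:
  assumes M: "nonneg_mat M n" and ev: "mat_apply M n z j = \<mu> * z j" and \<mu>: "1 \<le> \<mu>" and j: "j < n"
  shows "\<bar>z j\<bar> \<le> mat_apply M n (\<lambda>l. \<bar>z l\<bar>) j"
proof -
  have "\<bar>z j\<bar> \<le> \<mu> * \<bar>z j\<bar>" using mult_right_mono[OF \<mu>, of "\<bar>z j\<bar>"] by simp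
  also have "\<dots> = \<bar>mat_apply M n z j\<bar>" using ev \<mu> by (simp add: abs_mult)
  also have "\<dots> \<le> (\<Sum>l<n. \<bar>M $$ (j, l) * z l\<bar>)" unfolding mat_apply_def by (rule sum_abs)
  also have "\<dots> = mat_apply M n (\<lambda>l. \<bar>z l\<bar>) j"
    unfolding mat_apply_def using M j by (intro sum.cong) (auto simp: abs_mult nonneg_mat_def)
  finally show ?thesis .
qed

lemma positive_left_fixed_vector:
  assumes Ac: "A \<in> carrier_mat n n" and A0: "nonneg_mat A n" and irr: "irreducible_mat A n"
    and bnd: "poly_bounded_powers (transpose_mat A) n" and root: "poly (char_poly A) 1 = 0"
  obtains w where "\<And>j. j < n \<Longrightarrow> 0 < w j"
    "\<And>j. j < n \<Longrightarrow> mat_apply (transpose_mat A) n w j = w j"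
proof -
  let ?AT = "transpose_mat A"
  have ATc: "?AT \<in> carrier_mat n n" using Ac by simp
  have AT0: "nonneg_mat ?AT n" using A0 Ac unfolding nonneg_mat_def by auto
  have irrT: "irreducible_mat ?AT n" by (rule irreducible_mat_transpose[OF Ac irr])
  have "poly (char_poly ?AT) 1 = 0" using root Ac by simp
  then obtain z where z: "\<exists>i<n. z i \<noteq> 0" "\<And>j. j < n \<Longrightarrow> mat_apply ?AT n z j = 1 * z j"
    using real_eigenvector_fun[OF ATc] by blast
  define w where "w = (\<lambda>l. \<bar>z l\<bar>)"
  from z(1) obtain i where i: "i < n" "0 < w i" unfolding w_def by auto
  have w0: "\<And>j. 0 \<le> w j" unfolding w_def by simp
  have "\<And>j. j < n \<Longrightarrow> w j \<le> mat_apply ?AT n w j"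
    unfolding w_def by (rule abs_eigenvector_subinvariant[OF AT0 z(2)]) auto
  then have wfix: "\<And>j. j < n \<Longrightarrow> mat_apply ?AT n w j = w j"
    using subinvariant_imp_invariant[of ?AT n w i] ATc AT0 irrT bnd w0 i by blast
  moreover have "\<And>j. j < n \<Longrightarrow> 0 < w j"
    using irreducible_mat_subfixed_pos[of ?AT n w i] AT0 irrT w0 i wfix by simp
  ultimately show thesis using that by blast
qed

text \<open>Pairing with a positive left fixed vector w: the sum of w j * ((A y) j - y j) is zero.\<close>
lemma subinvariant_eq_of_left_fixed:
  assumes Ac: "A \<in> carrier_mat n n" and w: "\<And>j. j < n \<Longrightarrow> 0 < w j"
    and wfix: "\<And>j. j < n \<Longrightarrow> mat_apply (transpose_mat A) n w j = w j"
    and Ay: "\<And>j. j < n \<Longrightarrow> y j \<le> mat_apply A n y j" and j: "j < n"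
  shows "mat_apply A n y j = y j"
proof -
  have AT: "\<And>l j. l < n \<Longrightarrow> j < n \<Longrightarrow> transpose_mat A $$ (l, j) = A $$ (j, l)"
    using Ac by simp
  have "(\<Sum>j<n. w j * (mat_apply A n y j - y j)) =
      (\<Sum>j<n. w j * mat_apply A n y j) - (\<Sum>j<n. w j * y j)"
    by (simp add: algebra_simps sum_subtractf)
  also have "(\<Sum>j<n. w j * mat_apply A n y j) = (\<Sum>j<n. \<Sum>l<n. w j * A $$ (j, l) * y l)"
    unfolding mat_apply_def sum_distrib_left by (simp add: mult.assoc)
  also have "\<dots> = (\<Sum>l<n. \<Sum>j<n. w j * A $$ (j, l) * y l)" by (rule sum.swap)
  also have "\<dots> = (\<Sum>l<n. y l * mat_apply (transpose_mat A) n w l)"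
    unfolding mat_apply_def sum_distrib_left by (intro sum.cong refl) (simp add: AT)
  also have "\<dots> = (\<Sum>j<n. w j * y j)" using wfix by (auto intro!: sum.cong)
  finally have "(\<Sum>j<n. w j * (mat_apply A n y j - y j)) = 0" by simp
  moreover have "\<forall>j\<in>{..<n}. 0 \<le> w j * (mat_apply A n y j - y j)"
    using Ay w by (simp add: less_imp_le)
  ultimately have "\<forall>j\<in>{..<n}. w j * (mat_apply A n y j - y j) = 0"
    using sum_nonneg_eq_0_iff[of "{..<n}" "\<lambda>j. w j * (mat_apply A n y j - y j)"] by blast
  with w[OF j] j show ?thesis by force
qed

lemma monic_poly_root_ge:
  fixes p :: "real poly"
  assumes lc: "lead_coeff p = 1" and dg: "0 < degree p" and pa: "poly p a \<le> 0"
  obtains x where "a \<le> x" "poly p x = 0"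
proof (cases "poly p a = 0")
  case False
  with pa have neg: "poly p a < 0" by simp
  from poly_pinfty_ge[of p 1] lc dg obtain N where N: "\<And>x. N \<le> x \<Longrightarrow> 1 \<le> poly p x" by auto
  have "0 < poly p (max N (a + 1))" using N[of "max N (a + 1)"] by simp
  moreover have "a < max N (a + 1)" by simp
  ultimately obtain x where "a < x" "poly p x = 0" using poly_IVT_pos[of a _ p] neg by blast
  then show thesis by (intro that) auto
qed (use that[of a] in simp)

lemma char_poly_mat_erase_pos_at_one:
  assumes Ac: "A \<in> carrier_mat n n" and A0: "nonneg_mat A n" and irr: "irreducible_mat A n"
    and w: "\<And>j. j < n \<Longrightarrow> 0 < w j"
    and wfix: "\<And>j. j < n \<Longrightarrow> mat_apply (transpose_mat A) n w j = w j"
    and i: "i < n"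
  shows "0 < poly (char_poly (mat_erase A i i)) 1"
proof (rule ccontr)
  assume not_pos: "\<not> 0 < poly (char_poly (mat_erase A i i)) 1"
  define E where "E = mat_erase A i i"
  have Ec: "E \<in> carrier_mat n n" unfolding E_def using Ac by simp
  have Ei: "\<And>j l. j < n \<Longrightarrow> l < n \<Longrightarrow> E $$ (j, l) = (if j = i \<or> l = i then 0 else A $$ (j, l))"
    unfolding E_def mat_erase_def using Ac by auto
  have E0: "nonneg_mat E n" using A0 Ei unfolding nonneg_mat_def by auto
  have "lead_coeff (char_poly E) = 1" "0 < degree (char_poly E)"
    using degree_monic_char_poly[OF Ec] i by auto
  moreover have "poly (char_poly E) 1 \<le> 0" using not_pos unfolding E_def by simp
  ultimately obtain \<mu> where \<mu>: "1 \<le> \<mu>" "poly (char_poly E) \<mu> = 0"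
    by (rule monic_poly_root_ge)
  then obtain z where z: "\<exists>j<n. z j \<noteq> 0" "\<And>j. j < n \<Longrightarrow> mat_apply E n z j = \<mu> * z j"
    using real_eigenvector_fun[OF Ec] by blast
  have "mat_apply E n z i = 0" unfolding mat_apply_def using Ei i by auto
  with z(2)[OF i] \<mu>(1) have zi: "z i = 0" by simp
  define y where "y = (\<lambda>l. \<bar>z l\<bar>)"
  have y0: "\<And>j. 0 \<le> y j" unfolding y_def by simp
  have "y j \<le> mat_apply A n y j" if j: "j < n" for j
  proof -
    have "y j \<le> mat_apply E n y j"
      unfolding y_def by (rule abs_eigenvector_subinvariant[OF E0 z(2)[OF j] \<mu>(1) j])
    also have "\<dots> \<le> mat_apply A n y j" unfolding mat_apply_def
      by (rule sum_mono) (use Ei A0 j y0 in \<open>auto simp: nonneg_mat_def\<close>)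
    finally show ?thesis .
  qed
  then have yfix: "\<And>j. j < n \<Longrightarrow> mat_apply A n y j = y j"
    using subinvariant_eq_of_left_fixed[of A n w y] Ac w wfix by blast
  from z(1) obtain l where "l < n" "0 < y l" unfolding y_def by auto
  then have "0 < y i" using irreducible_mat_subfixed_pos[of A n y l i] A0 irr y0 yfix i by simp
  with zi show False unfolding y_def by simp
qed

lemma pderiv_char_poly_pos_at_one:
  assumes Ac: "A \<in> carrier_mat n n" and A0: "nonneg_mat A n" and irr: "irreducible_mat A n"
    and bnd: "poly_bounded_powers (transpose_mat A) n" and root: "poly (char_poly A) 1 = 0"
  shows "0 < poly (pderiv (char_poly A)) 1"
proof -
  obtain w where w: "\<And>j. j < n \<Longrightarrow> 0 < w j"
    and wfix: "\<And>j. j < n \<Longrightarrow> mat_apply (transpose_mat A) n w j = w j"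
    using positive_left_fixed_vector[OF Ac A0 irr bnd root] by blast
  obtain z :: "nat \<Rightarrow> real" where "\<exists>i<n. z i \<noteq> 0" using real_eigenvector_fun[OF Ac root] by blast
  then have n: "0 < n" by auto
  have "poly (monom 1 1 * pderiv (char_poly A)) 1 = poly (\<Sum>i<n. char_poly (mat_erase A i i)) 1"
    by (simp only: pderiv_char_poly_mat_erase[OF Ac])
  then have "poly (pderiv (char_poly A)) 1 = (\<Sum>i<n. poly (char_poly (mat_erase A i i)) 1)"
    by (simp add: poly_sum poly_monom)
  also have "0 < \<dots>"
  proof (rule sum_pos)
    fix i assume i: "i \<in> {..<n}"
    show "0 < poly (char_poly (mat_erase A i i)) 1"
      by (rule char_poly_mat_erase_pos_at_one[of A n w i]) (use Ac A0 irr w wfix i in auto)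
  qed (use n in auto)
  finally show ?thesis .
qed

lemma coeff_char_poly_trace:
  fixes A :: "'a :: {idom, ring_char_0} mat"
  assumes A: "A \<in> carrier_mat n n" and n: "0 < n"
  shows "coeff (char_poly A) (n - 1) = - (\<Sum>i<n. A $$ (i, i))"
  using A n
proof (induction n arbitrary: A)
  case 0 then show ?case by simp
next
  case (Suc m A)
  show ?case
  proof (cases "m = 0")
    case True
    have "upper_triangular A" using Suc.prems True by (auto simp: upper_triangular_def)
    moreover have "diag_mat A = [A $$ (0, 0)]" using Suc.prems True by (simp add: diag_mat_def)
    ultimately have "char_poly A = [:- A $$ (0, 0), 1:]"
      using char_poly_upper_triangular[OF Suc.prems(1)] by simp
    with True show ?thesis by simp
  next
    case False
    define d where "d = (\<lambda>i. A $$ (i, i))"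
    have "of_nat m * coeff (char_poly A) m = coeff (pderiv (char_poly A)) (m - 1)"
      using False by (simp add: coeff_pderiv)
    also have "\<dots> = (\<Sum>i<Suc m. coeff (char_poly (mat_delete A i i)) (m - 1))"
      by (simp add: pderiv_char_poly[OF Suc.prems(1)] coeff_sum)
    also have "\<dots> = (\<Sum>i<Suc m. - ((\<Sum>j<Suc m. d j) - d i))"
    proof (rule sum.cong[OF refl])
      fix i assume i: "i \<in> {..<Suc m}"
      have Ai: "mat_delete A i i \<in> carrier_mat m m" using mat_delete_carrier[OF Suc.prems(1)] by simp
      have "(\<Sum>j<m. mat_delete A i i $$ (j, j)) = (\<Sum>j<m. d (insert_index i j))"
        using mat_delete_index[OF Suc.prems(1), of i i] i unfolding d_def by (intro sum.cong) auto
      also have "\<dots> = sum d (insert_index i ` {0..<m})"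
        by (simp add: sum.reindex[OF insert_index_inj_on] atLeast0LessThan)
      also have "\<dots> = sum d ({0..<Suc m} - {i})" using i by (simp add: insert_index_image)
      also have "\<dots> = (\<Sum>j<Suc m. d j) - d i" using i by (simp add: sum_diff1 atLeast0LessThan)
      finally show "coeff (char_poly (mat_delete A i i)) (m - 1) = - ((\<Sum>j<Suc m. d j) - d i)"
        using Suc.IH[OF Ai] False by simp
    qed
    also have "\<dots> = of_nat m * (- (\<Sum>j<Suc m. d j))"
      by (simp add: sum_subtractf algebra_simps)
    finally show ?thesis unfolding d_def using False by simp
  qed
qed

lemma monic_prod_mset_linear:
  fixes M :: "'a :: idom multiset"
  shows "degree (\<Prod>x\<in>#M. [:- x, 1:]) = size M \<and> lead_coeff (\<Prod>x\<in>#M. [:- x, 1:]) = 1"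
proof (induction M)
  case (add x M)
  define P where "P = (\<Prod>x\<in>#M. [:- x, 1:])"
  have "P \<noteq> 0" unfolding P_def by auto
  then have "degree ([:- x, 1:] * P) = Suc (degree P)"
    using degree_mult_eq[of "[:- x, 1:]" P] by simp
  moreover have "lead_coeff ([:- x, 1:] * P) = lead_coeff P"
    using lead_coeff_mult[of "[:- x, 1:]" P] by simp
  ultimately show ?case using add.IH unfolding P_def by (auto simp del: mult_pCons_left)
qed simp

lemma coeff_prod_mset_linear:
  fixes M :: "'a :: idom multiset"
  assumes "M \<noteq> {#}"
  shows "coeff (\<Prod>x\<in>#M. [:- x, 1:]) (size M - 1) = - sum_mset M"
  using assms
proof (induction M)
  case (add x M)
  define P where "P = (\<Prod>x\<in>#M. [:- x, 1:])"
  have "(\<Prod>x\<in>#add_mset x M. [:- x, 1:]) = Polynomial.smult (- x) P + pCons 0 P"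
    unfolding P_def by (simp add: mult_pCons_left)
  then have cf: "coeff (\<Prod>x\<in>#add_mset x M. [:- x, 1:]) (size M) =
      - x * coeff P (size M) + (if size M = 0 then 0 else coeff P (size M - 1))"
    by (simp add: coeff_pCons split: nat.split)
  have "coeff P (size M) = 1" using monic_prod_mset_linear[of M] unfolding P_def by metis
  with cf add.IH show ?case by (cases "M = {#}") (auto simp: P_def)
qed simp

lemma order_prod_mset_linear:
  fixes M :: "'a :: idom multiset"
  shows "order a (\<Prod>x\<in>#M. [:- x, 1:]) = count M a"
proof (induction M)
  case (add x M)
  define P where "P = (\<Prod>x\<in>#M. [:- x, 1:])"
  have "P \<noteq> 0" unfolding P_def by auto
  then have "[:- x, 1:] * P \<noteq> 0" by (simp del: mult_pCons_left)
  then have "order a ([:- x, 1:] * P) = order a [:- x, 1:] + order a P"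
    by (rule order_mult)
  with add.IH show ?case unfolding P_def by (simp add: order_linear' del: mult_pCons_left)
qed (simp add: order_0I)

lemma prod_mset_linear_dvd_imp_subseteq:
  fixes M N :: "'a :: idom multiset"
  assumes "(\<Prod>x\<in>#M. [:- x, 1:]) dvd (\<Prod>x\<in>#N. [:- x, 1:])"
  shows "M \<subseteq># N"
proof (rule mset_subset_eqI)
  fix a
  have "(\<Prod>x\<in>#N. [:- x, 1:]) \<noteq> 0" by auto
  from dvd_imp_order_le[OF this assms] show "count M a \<le> count N a"
    by (simp add: order_prod_mset_linear)
qed

lemma trace_eq_sum_mset:
  fixes A :: "'a :: {idom, ring_char_0} mat"
  assumes A: "A \<in> carrier_mat n n" and cp: "char_poly A = (\<Prod>x\<in>#M. [:- x, 1:])"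
  shows "(\<Sum>i<n. A $$ (i, i)) = sum_mset M"
proof -
  have size: "size M = n"
    using degree_monic_char_poly[OF A] monic_prod_mset_linear[of M] cp by simp
  show ?thesis
  proof (cases "n = 0")
    case False
    then have "M \<noteq> {#}" using size by auto
    from coeff_prod_mset_linear[OF this] coeff_char_poly_trace[OF A] False cp size
    show ?thesis by simp
  qed (use size in simp)
qed

lemma prod_mset_linear_double_root:
  fixes M :: "'a :: idom multiset"
  assumes "2 \<le> count M a"
  shows "poly (\<Prod>x\<in>#M. [:- x, 1:]) a = 0 \<and> poly (pderiv (\<Prod>x\<in>#M. [:- x, 1:])) a = 0"
proof -
  define N where "N = M - {#a, a#}"
  have "M = add_mset a (add_mset a N)"
    unfolding N_def using assms by (auto simp: multiset_eq_iff)
  then have "(\<Prod>x\<in>#M. [:- x, 1:]) = [:- a, 1:] * ([:- a, 1:] * (\<Prod>x\<in>#N. [:- x, 1:]))"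
    by (simp add: mult.assoc)
  then show ?thesis by (simp add: pderiv_mult del: mult_pCons_left)
qed

lemma det_permute_rows_cols:
  fixes M :: "'a :: comm_ring_1 mat"
  assumes M: "M \<in> carrier_mat n n" and p: "p permutes {0..<n}"
  shows "det (mat n n (\<lambda>(i, j). M $$ (p i, p j))) = det M"
proof -
  have pn: "\<And>i. i < n \<Longrightarrow> p i < n" using p by (simp add: permutes_in_image)
  define R where "R = mat n n (\<lambda>(i, j). M $$ (p i, j))"
  have R: "R \<in> carrier_mat n n" unfolding R_def by simp
  define R' where "R' = mat n n (\<lambda>(i, j). transpose_mat R $$ (p i, j))"
  have eq: "mat n n (\<lambda>(i, j). M $$ (p i, p j)) = transpose_mat R'"
    by (rule eq_matI) (use pn R in \<open>auto simp: R'_def R_def\<close>)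
  have "det (mat n n (\<lambda>(i, j). M $$ (p i, p j))) = det R'"
    unfolding eq by (rule det_transpose[of _ n]) (simp add: R'_def)
  also have "\<dots> = signof p * det (transpose_mat R)"
    unfolding R'_def by (rule det_permute_rows[OF _ p]) (use R in simp)
  also have "\<dots> = signof p * (signof p * det M)"
    using det_transpose[OF R] det_permute_rows[OF M p] by (simp add: R_def)
  also have "\<dots> = (signof p * signof p) * det M" by (simp add: ac_simps)
  also have "signof p * signof p = (1 :: 'a)"
    by (metis of_int_1 of_int_mult sign_idempotent)
  finally show ?thesis by simp
qed

lemma char_poly_permute_rows_cols:
  fixes A :: "'a :: comm_ring_1 mat"
  assumes A: "A \<in> carrier_mat n n" and p: "p permutes {0..<n}"
  shows "char_poly (mat n n (\<lambda>(i, j). A $$ (p i, p j))) = char_poly A"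
proof -
  have pn: "\<And>i. i < n \<Longrightarrow> p i < n" using p by (simp add: permutes_in_image)
  have pinj: "\<And>i j. i < n \<Longrightarrow> j < n \<Longrightarrow> p i = p j \<longleftrightarrow> i = j"
    using p by (metis permutes_inj injD)
  have "char_poly_matrix (mat n n (\<lambda>(i, j). A $$ (p i, p j))) =
      mat n n (\<lambda>(i, j). char_poly_matrix A $$ (p i, p j))"
    by (rule eq_matI) (use A pn pinj in \<open>auto simp: char_poly_matrix_def\<close>)
  then show ?thesis
    unfolding char_poly_def using det_permute_rows_cols[OF char_poly_matrix_closed[OF A] p] by simp
qed

lemma char_poly_upper_right_zero_block:
  fixes A :: "'a :: idom mat"
  assumes A: "A \<in> carrier_mat n n" and m: "m \<le> n"
    and zero: "\<And>i j. i < m \<Longrightarrow> m \<le> j \<Longrightarrow> j < n \<Longrightarrow> A $$ (i, j) = 0"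
  shows "char_poly A = char_poly (mat m m (\<lambda>(i, j). A $$ (i, j))) *
    char_poly (mat (n - m) (n - m) (\<lambda>(i, j). A $$ (m + i, m + j)))"
proof -
  define B1 where "B1 = mat m m (\<lambda>(i, j). A $$ (i, j))"
  define B2 where "B2 = mat (n - m) (n - m) (\<lambda>(i, j). A $$ (m + i, m + j))"
  define C where "C = (mat (n - m) m (\<lambda>(i, j). [: - A $$ (m + i, j) :]) :: 'a poly mat)"
  have "char_poly_matrix A =
      four_block_mat (char_poly_matrix B1) (0\<^sub>m m (n - m)) C (char_poly_matrix B2)"
  proof (rule eq_matI)
    fix i j assume "i < dim_row (four_block_mat (char_poly_matrix B1) (0\<^sub>m m (n - m)) C (char_poly_matrix B2))"
      "j < dim_col (four_block_mat (char_poly_matrix B1) (0\<^sub>m m (n - m)) C (char_poly_matrix B2))"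
    then have ij: "i < n" "j < n" using m by (auto simp: B1_def B2_def char_poly_matrix_def)
    show "char_poly_matrix A $$ (i, j) =
      four_block_mat (char_poly_matrix B1) (0\<^sub>m m (n - m)) C (char_poly_matrix B2) $$ (i, j)"
      using ij m A zero[of i j]
      by (cases "i < m"; cases "j < m") (auto simp: B1_def B2_def C_def char_poly_matrix_def)
  qed (use A m in \<open>auto simp: B1_def B2_def char_poly_matrix_def\<close>)
  moreover have "char_poly_matrix B1 \<in> carrier_mat m m" "C \<in> carrier_mat (n - m) m"
    "char_poly_matrix B2 \<in> carrier_mat (n - m) (n - m)" by (simp_all add: B1_def B2_def C_def)
  ultimately have "char_poly A = char_poly B1 * char_poly B2"
    unfolding char_poly_def[of A] char_poly_def[of B1] char_poly_def[of B2]
    by (simp add: det_four_block_mat_upper_right_zero)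
  then show ?thesis unfolding B1_def B2_def .
qed

lemma permutes_to_front:
  assumes U: "U \<subseteq> {..<n}"
  obtains p where "p permutes {0..<n}" "\<And>i. i < n \<Longrightarrow> p i \<in> U \<longleftrightarrow> i < card U"
proof -
  define T where "T = {..<n} - U"
  have fin: "finite U" "finite T" using U finite_subset by (auto simp: T_def)
  have card: "card U + card T = n"
    unfolding T_def using U card_mono[of "{..<n}" U] by (simp add: card_Diff_subset finite_subset)
  define L where "L = sorted_list_of_set U @ sorted_list_of_set T"
  have L: "length L = n" "distinct L" "set L = {..<n}"
    unfolding L_def using fin card U by (auto simp: T_def)
  define p where "p = (\<lambda>i. if i < n then L ! i else i)"
  have "bij_betw ((!) L) {..<n} {..<n}" using bij_betw_nth[OF L(2) _ L(3)[symmetric]] L(1) by simp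
  then have "bij_betw p {0..<n} {0..<n}"
    unfolding p_def atLeast0LessThan by (rule bij_betw_cong[THEN iffD1, rotated]) auto
  then have "p permutes {0..<n}" by (rule bij_imp_permutes) (auto simp: p_def)
  moreover have "p i \<in> U \<longleftrightarrow> i < card U" if i: "i < n" for i
  proof (cases "i < card U")
    case True
    then have "p i = sorted_list_of_set U ! i" using i fin by (simp add: p_def L_def nth_append)
    with True fin nth_mem[of i "sorted_list_of_set U"] show ?thesis by simp
  next
    case False
    then have "p i = sorted_list_of_set T ! (i - card U)"
      using i fin by (simp add: p_def L_def nth_append)
    moreover have "i - card U < card T" using False i card by linarith
    ultimately have "p i \<in> T" using fin nth_mem[of "i - card U" "sorted_list_of_set T"] by simp
    with False show ?thesis by (simp add: T_def)
  qed
  ultimately show thesis by (rule that)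
qed

lemma char_poly_block_dvd:
  fixes A :: "'a :: idom mat"
  assumes A: "A \<in> carrier_mat n n" and T: "T \<subseteq> {..<n}" "T \<noteq> {}" "T \<noteq> {..<n}"
    and zero: "\<And>j l. j < n \<Longrightarrow> l \<in> T \<Longrightarrow> j \<notin> T \<Longrightarrow> A $$ (j, l) = 0"
  obtains m p where "0 < m" "m < n" "p permutes {0..<n}"
    "char_poly (mat m m (\<lambda>(i, j). A $$ (p i, p j))) dvd char_poly A"
proof -
  define U where "U = {..<n} - T"
  define m where "m = card U"
  obtain p where p: "p permutes {0..<n}" and pU: "\<And>i. i < n \<Longrightarrow> p i \<in> U \<longleftrightarrow> i < m"
    using permutes_to_front[of U n] unfolding m_def U_def by auto
  have pn: "\<And>i. i < n \<Longrightarrow> p i < n" using p by (simp add: permutes_in_image)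
  have finT: "finite T" using T(1) finite_subset by blast
  have "card T < n" using psubset_card_mono[of "{..<n}" T] T by auto
  moreover have "0 < card T" using T(2) finT by (simp add: card_gt_0_iff)
  moreover have "m = n - card T" unfolding m_def U_def using T(1) finT by (simp add: card_Diff_subset)
  ultimately have m: "0 < m" "m < n" by auto
  define A' where "A' = mat n n (\<lambda>(i, j). A $$ (p i, p j))"
  have "A' \<in> carrier_mat n n" unfolding A'_def by simp
  moreover have "A' $$ (i, j) = 0" if "i < m" "m \<le> j" "j < n" for i j
    using that pU[of i] pU[of j] pn[of i] pn[of j] zero[of "p i" "p j"] unfolding A'_def U_def by auto
  ultimately have "char_poly A' = char_poly (mat m m (\<lambda>(i, j). A' $$ (i, j))) *
      char_poly (mat (n - m) (n - m) (\<lambda>(i, j). A' $$ (m + i, m + j)))"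
    using m by (intro char_poly_upper_right_zero_block) auto
  moreover have "mat m m (\<lambda>(i, j). A' $$ (i, j)) = mat m m (\<lambda>(i, j). A $$ (p i, p j))"
    using m by (intro eq_matI) (auto simp: A'_def)
  moreover have "char_poly A' = char_poly A" unfolding A'_def by (rule char_poly_permute_rows_cols[OF A p])
  ultimately show thesis using that[OF m p] by (metis dvd_triv_left)
qed

lemma poly_char_poly_of_real:
  fixes A :: "real mat"
  assumes A: "A \<in> carrier_mat n n"
  shows "poly (char_poly (map_mat complex_of_real A)) (of_real x) = of_real (poly (char_poly A) x)"
    and "poly (pderiv (char_poly (map_mat complex_of_real A))) (of_real x) =
      of_real (poly (pderiv (char_poly A)) x)"
  by (simp_all add: of_real_hom.char_poly_hom[OF A] of_real_hom.poly_map_poly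
      of_real_hom.map_poly_pderiv[symmetric])

lemma poly_bounded_powers_if_roots_le_one:
  fixes A :: "real mat"
  assumes A: "A \<in> carrier_mat n n"
    and roots: "\<And>x. poly (char_poly (map_mat complex_of_real A)) x = 0 \<Longrightarrow> cmod x \<le> 1"
  shows "poly_bounded_powers A n"
proof (cases "n = 0")
  case False
  let ?Ac = "map_mat complex_of_real A"
  have Ac: "?Ac \<in> carrier_mat n n" using A by simp
  obtain ev where "ev \<in> spectrum ?Ac" "spectral_radius ?Ac = cmod ev"
    using spectral_radius_mem_max(1)[OF Ac] False by auto
  with roots have "spectral_radius ?Ac \<le> 1" by (simp add: spectrum_root_char_poly[OF Ac])
  from spectral_radius_jnf_norm_bound_le_1_upper_triangular[OF Ac this] obtain c1 c2
    where nb: "\<And>m. norm_bound (?Ac ^\<^sub>m m) (c1 + c2 * real m ^ (n - 1))" by blast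
  have "\<bar>(A ^\<^sub>m m) $$ (i, j)\<bar> \<le> c1 + c2 * real m ^ (n - 1)" if "i < n" "j < n" for m i j
  proof -
    have "?Ac ^\<^sub>m m = map_mat complex_of_real (A ^\<^sub>m m)"
      by (rule of_real_hom.mat_hom_pow[OF A, symmetric])
    then have "(?Ac ^\<^sub>m m) $$ (i, j) = complex_of_real ((A ^\<^sub>m m) $$ (i, j))"
      using that A by simp
    moreover have "cmod ((?Ac ^\<^sub>m m) $$ (i, j)) \<le> c1 + c2 * real m ^ (n - 1)"
      using nb[of m] that Ac unfolding norm_bound_def by simp
    ultimately show ?thesis by simp
  qed
  then show ?thesis unfolding poly_bounded_powers_def by blast
qed (simp add: poly_bounded_powers_def)

lemma nonneg_mat_diag_zero_if_sum_mset_zero: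
  fixes A :: "real mat"
  assumes A: "A \<in> carrier_mat n n" and A0: "nonneg_mat A n"
    and cp: "char_poly (map_mat complex_of_real A) = (\<Prod>x\<in>#\<sigma>. [:- x, 1:])"
    and \<sigma>: "sum_mset \<sigma> = 0" and i: "i < n"
  shows "A $$ (i, i) = 0"
proof -
  have "map_mat complex_of_real A \<in> carrier_mat n n" using A by simp
  from trace_eq_sum_mset[OF this cp] A \<sigma> have "complex_of_real (\<Sum>i<n. A $$ (i, i)) = 0" by simp
  then have "(\<Sum>i<n. A $$ (i, i)) = 0" by (simp only: of_real_eq_0_iff)
  with A0 i show ?thesis
    using sum_nonneg_eq_0_iff[of "{..<n}" "\<lambda>i. A $$ (i, i)"] unfolding nonneg_mat_def by auto
qed

lemma poly_bounded_powers_transpose_if_norm_le_one: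
  fixes A :: "real mat"
  assumes A: "A \<in> carrier_mat n n"
    and cp: "char_poly (map_mat complex_of_real A) = (\<Prod>x\<in>#\<sigma>. [:- x, 1:])"
    and \<sigma>: "\<And>x. x \<in># \<sigma> \<Longrightarrow> cmod x \<le> 1"
  shows "poly_bounded_powers (transpose_mat A) n"
proof (rule poly_bounded_powers_if_roots_le_one)
  fix x assume root: "poly (char_poly (map_mat complex_of_real (transpose_mat A))) x = 0"
  have "map_mat complex_of_real (transpose_mat A) = transpose_mat (map_mat complex_of_real A)"
    using A by (auto intro!: eq_matI)
  with root cp A have "poly (\<Prod>y\<in>#\<sigma>. [:- y, 1:]) x = 0" by simp
  then have "x \<in># \<sigma>" by (auto simp: poly_prod_mset prod_mset_zero_iff)
  then show "cmod x \<le> 1" by (rule \<sigma>)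
qed (use A in simp)

lemma zero_sum_factor_of_reducible:
  fixes A :: "real mat"
  assumes A: "A \<in> carrier_mat n n" and A0: "nonneg_mat A n" and red: "\<not> irreducible_mat A n"
    and diag: "\<And>i. i < n \<Longrightarrow> A $$ (i, i) = 0"
    and cp: "char_poly (map_mat complex_of_real A) = (\<Prod>x\<in>#\<sigma>. [:- x, 1:])"
  obtains M where "M \<subseteq># \<sigma>" "0 < size M" "size M < n" "sum_mset M = 0"
proof -
  let ?Ac = "map_mat complex_of_real A"
  have Ac: "?Ac \<in> carrier_mat n n" using A by simp
  from red obtain S where S: "S \<subseteq> {..<n}" "S \<noteq> {}" "S \<noteq> {..<n}"
    and Sz: "\<And>j l. j < n \<Longrightarrow> l \<in> S \<Longrightarrow> j \<notin> S \<Longrightarrow> \<not> 0 < A $$ (j, l)"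
    unfolding irreducible_mat_def by blast
  have "?Ac $$ (j, l) = 0" if "j < n" "l \<in> S" "j \<notin> S" for j l
    using that S A0 Sz[OF that] A unfolding nonneg_mat_def by force
  then obtain m p where m: "0 < m" "m < n" and p: "p permutes {0..<n}"
    and dvd: "char_poly (mat m m (\<lambda>(i, j). ?Ac $$ (p i, p j))) dvd char_poly ?Ac"
    using char_poly_block_dvd[OF Ac S] by blast
  define B where "B = mat m m (\<lambda>(i, j). ?Ac $$ (p i, p j))"
  have B: "B \<in> carrier_mat m m" unfolding B_def by simp
  obtain as where as: "char_poly B = (\<Prod>a\<leftarrow>as. [:- a, 1:])" "length as = m"
    using char_poly_factorized[OF B] by blast
  then have cpB: "char_poly B = (\<Prod>x\<in>#mset as. [:- x, 1:])"
    by (simp add: prod_mset_prod_list[symmetric])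
  have "sum_mset (mset as) = (\<Sum>i<m. B $$ (i, i))" by (rule trace_eq_sum_mset[OF B cpB, symmetric])
  also have "\<dots> = 0"
    using diag m A p by (auto simp: B_def permutes_in_image intro!: sum.neutral)
  finally have "sum_mset (mset as) = 0" .
  moreover have "mset as \<subseteq># \<sigma>"
    using dvd cp cpB unfolding B_def by (intro prod_mset_linear_dvd_imp_subseteq) simp
  ultimately show thesis using that[of "mset as"] as(2) m by simp
qed

lemma size_sigma_n: "size (sigma_n k) = 2 * (k + 1)"
  unfolding sigma_n_def by simp

definition sigma_a :: "nat \<Rightarrow> real" where
  "sigma_a k = -1 / (2 * real k + 1)"

definition sigma_b :: "nat \<Rightarrow> real" where
  "sigma_b k = (1 - 2 * real k) / (2 * real k + 1)"

lemma sigma_n_eq: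
  "sigma_n k = replicate_mset k 1 + {# of_real (sigma_a k) #} +
     replicate_mset (k + 1) (of_real (sigma_b k))"
  unfolding sigma_n_def sigma_a_def sigma_b_def by (rule refl)

lemma sigma_a_mult: "sigma_a k * (2 * real k + 1) = -1"
  unfolding sigma_a_def by simp

lemma sigma_b_mult: "sigma_b k * (2 * real k + 1) = 1 - 2 * real k"
  unfolding sigma_b_def by simp

lemma sum_mset_sigma_n: "sum_mset (sigma_n k) = 0"
proof -
  have "(real k + sigma_a k + real (k + 1) * sigma_b k) * (2 * real k + 1) =
      real k * (2 * real k + 1) + sigma_a k * (2 * real k + 1) + real (k + 1) * (sigma_b k * (2 * real k + 1))"
    by (simp only: distrib_right mult.assoc)
  also have "\<dots> = real k * (2 * real k + 1) + -1 + real (k + 1) * (1 - 2 * real k)"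
    unfolding sigma_a_mult sigma_b_mult ..
  also have "\<dots> = 0" by (simp add: algebra_simps)
  finally have "(real k + sigma_a k + real (k + 1) * sigma_b k) * (2 * real k + 1) = 0" .
  then have "real k + sigma_a k + real (k + 1) * sigma_b k = 0" by simp
  then have "complex_of_real (real k + sigma_a k + real (k + 1) * sigma_b k) = 0" by simp
  then show ?thesis unfolding sigma_n_eq by (simp add: algebra_simps)
qed

lemma norm_le_one_if_mem_sigma_n:
  assumes "x \<in># sigma_n k"
  shows "cmod x \<le> 1"
proof -
  have "\<bar>sigma_a k\<bar> \<le> 1" "\<bar>sigma_b k\<bar> \<le> 1"
    unfolding sigma_a_def sigma_b_def by (simp_all add: abs_div field_simps)
  moreover have "x = 1 \<or> x = of_real (sigma_a k) \<or> x = of_real (sigma_b k)"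
    using assms unfolding sigma_n_eq by (auto split: if_splits)
  ultimately show ?thesis by auto
qed

lemma sigma_n_values_distinct:
  assumes "2 \<le> k"
  shows "1 \<noteq> complex_of_real (sigma_a k)" "1 \<noteq> complex_of_real (sigma_b k)"
    "complex_of_real (sigma_a k) \<noteq> complex_of_real (sigma_b k)"
proof -
  have "1 \<noteq> sigma_a k" "1 \<noteq> sigma_b k" "sigma_a k \<noteq> sigma_b k"
    using sigma_a_mult[of k] sigma_b_mult[of k] assms by (auto simp: algebra_simps)
  then show "1 \<noteq> complex_of_real (sigma_a k)" "1 \<noteq> complex_of_real (sigma_b k)"
    "complex_of_real (sigma_a k) \<noteq> complex_of_real (sigma_b k)"
    by (metis of_real_1 of_real_eq_iff)+
qed

lemma sigma_n_count_balance:
  fixes k c1 c2 c3 :: nat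
  assumes k: "2 \<le> k" and c1: "c1 \<le> k" and c2: "c2 \<le> 1" and c3: "c3 \<le> k + 1"
    and bal: "c1 * (2 * k + 1) = c2 + c3 * (2 * k - 1)"
  shows "c1 + c2 + c3 = 0 \<or> c1 + c2 + c3 = 2 * (k + 1)"
proof (cases "c3 \<le> c1")
  case True
  then have "c3 * (2 * k - 1) \<le> c1 * (2 * k - 1)" by (simp add: mult_le_mono1)
  then have "c1 * (2 * k + 1) \<le> 1 + c1 * (2 * k - 1)" using bal c2 by linarith
  then have "c1 = 0" using k by (cases c1) (auto simp: algebra_simps)
  then show ?thesis using bal True by auto
next
  case False
  then have "(c1 + 1) * (2 * k - 1) \<le> c3 * (2 * k - 1)" by (intro mult_le_mono1) simp
  then have le: "(c1 + 1) * (2 * k - 1) \<le> c1 * (2 * k + 1)" using bal by linarith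
  have c1k: "c1 = k"
  proof (rule ccontr)
    assume "c1 \<noteq> k"
    with c1 have "c1 + 1 \<le> k" by simp
    moreover have "(c1 + 1) * (2 * k - 1) = c1 * (2 * k + 1) + (2 * k - 1 - 2 * c1)"
      using calculation k by (simp add: algebra_simps diff_mult_distrib2)
    ultimately show False using le by linarith
  qed
  show ?thesis
  proof (cases "c3 = k + 1")
    case True
    have "(k + 1) * (2 * k - 1) + 1 = k * (2 * k + 1)" using k by (cases k) (auto simp: algebra_simps)
    with bal c1k True have "c2 = 1" by simp
    with True c1k show ?thesis by simp
  next
    case False
    with c3 have "c3 * (2 * k - 1) \<le> k * (2 * k - 1)" by (simp add: mult_le_mono1)
    moreover have "k * (2 * k - 1) + 1 < k * (2 * k + 1)" using k by (cases k) (auto simp: algebra_simps)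
    moreover have "k * (2 * k + 1) = c2 + c3 * (2 * k - 1)" using bal c1k by simp
    ultimately show ?thesis using c2 by linarith
  qed
qed

lemma zero_sum_submultiset_sigma_n:
  assumes k: "2 \<le> k" and M: "M \<subseteq># sigma_n k" and s: "sum_mset M = 0"
  shows "size M = 0 \<or> size M = 2 * (k + 1)"
proof -
  define a where "a = sigma_a k"
  define b where "b = sigma_b k"
  have a': "a * (2 * real k + 1) = -1" and b': "b * (2 * real k + 1) = 1 - 2 * real k"
    unfolding a_def b_def by (rule sigma_a_mult sigma_b_mult)+
  have distinct: "1 \<noteq> complex_of_real a" "1 \<noteq> complex_of_real b"
      "complex_of_real a \<noteq> complex_of_real b"
    unfolding a_def b_def by (rule sigma_n_values_distinct[OF k])+
  have sig: "sigma_n k = replicate_mset k 1 + {#of_real a#} + replicate_mset (k + 1) (of_real b)"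
    unfolding a_def b_def by (rule sigma_n_eq)
  define c1 where "c1 = count M 1"
  define c2 where "c2 = count M (of_real a)"
  define c3 where "c3 = count M (of_real b)"
  have cnt: "\<And>x. count M x \<le> count (sigma_n k) x" using M by (simp add: subseteq_mset_def)
  have bounds: "c1 \<le> k" "c2 \<le> 1" "c3 \<le> k + 1"
    using cnt[of 1] cnt[of "of_real a"] cnt[of "of_real b"] distinct
    unfolding c1_def c2_def c3_def sig by auto
  have Meq: "M = replicate_mset c1 1 + replicate_mset c2 (of_real a) + replicate_mset c3 (of_real b)"
  proof (rule multiset_eqI)
    fix x
    show "count M x =
        count (replicate_mset c1 1 + replicate_mset c2 (of_real a) + replicate_mset c3 (of_real b)) x"
    proof (cases "x = 1 \<or> x = of_real a \<or> x = of_real b")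
      case True
      with distinct show ?thesis unfolding c1_def c2_def c3_def by auto
    next
      case False
      then have "count (sigma_n k) x = 0" unfolding sig by auto
      with cnt[of x] False show ?thesis by simp
    qed
  qed
  have "complex_of_real (real c1 + real c2 * a + real c3 * b) = sum_mset M"
    unfolding Meq by simp
  with s have "real c1 + real c2 * a + real c3 * b = 0" by (simp only: of_real_eq_0_iff)
  then have "(real c1 + real c2 * a + real c3 * b) * (2 * real k + 1) = 0" by simp
  then have "real c1 * (2 * real k + 1) = real c2 + real c3 * (2 * real k - 1)"
    by (simp only: distrib_right mult.assoc a' b') (simp add: algebra_simps)
  moreover have k1: "real (2 * k - 1) = 2 * real k - 1" using k by (simp add: of_nat_diff)
  ultimately have "real (c1 * (2 * k + 1)) = real (c2 + c3 * (2 * k - 1))"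
    unfolding of_nat_mult of_nat_add k1 by simp
  then have "c1 * (2 * k + 1) = c2 + c3 * (2 * k - 1)" by (simp only: of_nat_eq_iff)
  from sigma_n_count_balance[OF k bounds this] show ?thesis unfolding Meq by simp
qed

lemma not_realizable_sigma_n:
  assumes k: "2 \<le> k"
  shows "\<not> realizable (sigma_n k)"
proof
  define n where "n = size (sigma_n k)"
  assume "realizable (sigma_n k)"
  then obtain A :: "real mat" where A: "A \<in> carrier_mat n n"
    and nn: "\<And>i j. i < n \<Longrightarrow> j < n \<Longrightarrow> 0 \<le> A $$ (i, j)"
    and cp: "char_poly (map_mat complex_of_real A) = (\<Prod>x\<in>#sigma_n k. [:- x, 1:])"
    unfolding realizable_def n_def by blast
  have A0: "nonneg_mat A n" using nn unfolding nonneg_mat_def by blast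
  have diag: "\<And>i. i < n \<Longrightarrow> A $$ (i, i) = 0"
    using nonneg_mat_diag_zero_if_sum_mset_zero[OF A A0 cp sum_mset_sigma_n] .
  have "2 \<le> count (sigma_n k) 1" using k unfolding sigma_n_eq by simp
  then have "poly (\<Prod>x\<in>#sigma_n k. [:- x, 1:]) 1 = 0 \<and>
      poly (pderiv (\<Prod>x\<in>#sigma_n k. [:- x, 1:])) 1 = 0"
    by (rule prod_mset_linear_double_root)
  then have root: "poly (char_poly A) 1 = 0" "poly (pderiv (char_poly A)) 1 = 0"
    using poly_char_poly_of_real[OF A, of 1, unfolded cp] by simp_all
  have bnd: "poly_bounded_powers (transpose_mat A) n"
    using poly_bounded_powers_transpose_if_norm_le_one[OF A cp norm_le_one_if_mem_sigma_n] .
  show False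
  proof (cases "irreducible_mat A n")
    case True
    from pderiv_char_poly_pos_at_one[OF A A0 True bnd root(1)] root(2) show False by simp
  next
    case False
    then obtain M where M: "M \<subseteq># sigma_n k" "sum_mset M = 0" and "0 < size M" "size M < n"
      using zero_sum_factor_of_reducible[OF A A0 False diag cp] by blast
    with zero_sum_submultiset_sigma_n[OF k M] show False by (simp add: n_def size_sigma_n)
  qed
qed

theorem theorem3:
  fixes k n :: nat
  assumes "k \<ge> 2" and "n = 2 * (k + 1)"
  shows "size (sigma_n k) = n \<and> sum_mset (sigma_n k) = 0 \<and> \<not> realizable (sigma_n k)"
  using size_sigma_n sum_mset_sigma_n not_realizable_sigma_n[OF assms(1)] assms(2) by simp

end
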